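(* Let $\mathbb{F}$ be a field with more than $(l+2)/2$ elements, and let $\Phi: M_n(\mathbb{F}) \to M_l(\mathbb{F})$ be a linear map. Then $\Phi(X)\Phi(Y) = 0$ for all $X,Y \in M_n(\mathbb{F})$ if and only if there exist nonnegative integers $p,q,u,v$ with $2p+q = l$, $u\le p$, $v\le q$, and an invertible $S_0 \in M_l(\mathbb{F})$ (all independent of $A$) such that for every $A \in M_n(\mathbb{F})$, $$S_0^{-1}\Phi(A)S_0 = \begin{pmatrix} 0_p & Z_{12} & Z_{13}\\ 0_p & 0_p & 0\\ 0 & Z_{32} & 0_q\end{pmatrix},\quad Z_{13} = \begin{pmatrix} \hat Z_{13} & 0_{u,q-v}\\ 0_{p-u,v} & 0_{p-u,q-v}\end{pmatrix},\quad Z_{32} = \begin{pmatrix} 0_{v,u} & 0_{v,p-u}\\ 0_{q-v,u} & \hat Z_{32}\end{pmatrix},$$ where $Z_{12}\in M_p(\mathbb{F})$, $\hat Z_{13}$ is $u\times v$ and $\hat Z_{32}$ is $(q-v)\times(p-u)$ (all depending on $A$), the block rows/columns having sizes $p,p,q$.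
   Context: $0_{a,b}$ denotes the $a\times b$ zero matrix and $0_p$ the $p\times p$ zero matrix. *)

theory Defs
  imports "Jordan_Normal_Form.Matrix"
begin

definition block3_mat :: "nat \<Rightarrow> nat \<Rightarrow> nat \<Rightarrow>
    'a mat \<Rightarrow> 'a mat \<Rightarrow> 'a mat \<Rightarrow>
    'a mat \<Rightarrow> 'a mat \<Rightarrow> 'a mat \<Rightarrow>
    'a mat \<Rightarrow> 'a mat \<Rightarrow> 'a mat \<Rightarrow> 'a mat" where
  "block3_mat a b c Z11 Z12 Z13 Z21 Z22 Z23 Z31 Z32 Z33 =
     mat (a+b+c) (a+b+c) (\<lambda>(i,j).
       if i < a then
         (if j < a then Z11 $$ (i,j) else if j < a+b then Z12 $$ (i,j-a) else Z13 $$ (i,j-a-b))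
       else if i < a+b then
         (if j < a then Z21 $$ (i-a,j) else if j < a+b then Z22 $$ (i-a,j-a) else Z23 $$ (i-a,j-a-b))
       else
         (if j < a then Z31 $$ (i-a-b,j) else if j < a+b then Z32 $$ (i-a-b,j-a) else Z33 $$ (i-a-b,j-a-b)))"

definition linear_mat_map :: "nat \<Rightarrow> nat \<Rightarrow> ('a::field mat \<Rightarrow> 'a mat) \<Rightarrow> bool" where
  "linear_mat_map n l \<Phi> \<longleftrightarrow>
     (\<forall>A \<in> carrier_mat n n. \<Phi> A \<in> carrier_mat l l) \<and>
     (\<forall>A \<in> carrier_mat n n. \<forall>B \<in> carrier_mat n n. \<Phi> (A + B) = \<Phi> A + \<Phi> B) \<and>
     (\<forall>c. \<forall>A \<in> carrier_mat n n. \<Phi> (c \<cdot>\<^sub>m A) = c \<cdot>\<^sub>m \<Phi> A)"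

end

theory Submission
  imports Defs "Jordan_Normal_Form.Gauss_Jordan_Elimination" "Jordan_Normal_Form.Determinant"
begin

text \<open>Since the images of \<Phi> multiply pairwise to zero, every \<Phi>(A) maps into the sum W of
  all these images and annihilates W.  In a basis starting with a basis of W, every \<Phi>(A)
  therefore has the shape [[0, *], [0, 0]] with diagonal blocks of sizes r = dim W and l - r.
  If 2 r \<le> l this already is the normal form with p = r, u = p and v = q; otherwise a
  reordering of the basis gives the normal form with p = l - r and u = v = 0.  Conversely, two
  matrices in the normal form multiply to zero.\<close>

lemma linear_mat_mapD:
  assumes "linear_mat_map n l \<Phi>"
  shows "\<And>A. A \<in> carrier_mat n n \<Longrightarrow> \<Phi> A \<in> carrier_mat l l"
    and "\<And>A B. A \<in> carrier_mat n n \<Longrightarrow> B \<in> carrier_mat n n \<Longrightarrow> \<Phi> (A + B) = \<Phi> A + \<Phi> B"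
    and "\<And>c A. A \<in> carrier_mat n n \<Longrightarrow> \<Phi> (c \<cdot>\<^sub>m A) = c \<cdot>\<^sub>m \<Phi> A"
  using assms unfolding linear_mat_map_def by auto

definition mat_unit :: "nat \<Rightarrow> nat \<Rightarrow> nat \<Rightarrow> 'a::{zero,one} mat" where
  "mat_unit n k j = mat n n (\<lambda>(a,b). if a = k \<and> b = j then 1 else 0)"

lemma mat_unit_carrier [simp]: "mat_unit n k j \<in> carrier_mat n n"
  unfolding mat_unit_def by simp

lemma linear_functional_vanishing_on_mat_units:
  fixes g :: "'a::field mat \<Rightarrow> 'a"
  assumes add: "\<And>A B. A \<in> carrier_mat n n \<Longrightarrow> B \<in> carrier_mat n n \<Longrightarrow> g (A + B) = g A + g B"
    and smult: "\<And>c A. A \<in> carrier_mat n n \<Longrightarrow> g (c \<cdot>\<^sub>m A) = c * g A"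
    and units: "\<And>k j. k < n \<Longrightarrow> j < n \<Longrightarrow> g (mat_unit n k j) = 0"
    and A: "A \<in> carrier_mat n n"
  shows "g A = 0"
proof -
  define restrict where "restrict S = mat n n (\<lambda>ij. if ij \<in> S then A $$ ij else 0)" for S
  have restrict_carrier: "restrict S \<in> carrier_mat n n" for S
    unfolding restrict_def by simp
  have "g (restrict S) = 0" if "finite S" "S \<subseteq> {..<n} \<times> {..<n}" for S
    using that
  proof (induction S rule: finite_induct)
    case empty
    have "restrict {} = 0 \<cdot>\<^sub>m A"
      unfolding restrict_def using A by (intro eq_matI) auto
    then show ?case using smult[OF A, of 0] by simp
  next
    case (insert x S)
    obtain k j where x: "x = (k, j)" "k < n" "j < n" using insert.prems by auto
    have "restrict (insert x S) = restrict S + A $$ (k, j) \<cdot>\<^sub>m mat_unit n k j"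
      unfolding restrict_def mat_unit_def using insert.hyps(2) x by (intro eq_matI) auto
    then show ?case
      using add[OF restrict_carrier[of S]] smult[of "mat_unit n k j"] units[OF x(2,3)] insert
      by simp
  qed
  moreover have "restrict ({..<n} \<times> {..<n}) = A"
    unfolding restrict_def using A by (intro eq_matI) auto
  ultimately show ?thesis by (metis finite_SigmaI finite_lessThan order_refl)
qed

lemma linear_image_row_vanishing:
  fixes \<Phi> :: "'a::field mat \<Rightarrow> 'a mat"
  assumes lin: "linear_mat_map n l \<Phi>" and P: "P \<in> carrier_mat m l" and i: "i < m"
    and units: "\<And>k j c. k < n \<Longrightarrow> j < n \<Longrightarrow> c < l \<Longrightarrow> (P * \<Phi> (mat_unit n k j)) $$ (i, c) = 0"
    and A: "A \<in> carrier_mat n n"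
  shows "row (P * \<Phi> A) i = 0\<^sub>v l"
proof (rule eq_vecI)
  note \<Phi> = linear_mat_mapD[OF lin]
  show "dim_vec (row (P * \<Phi> A) i) = dim_vec (0\<^sub>v l)" using \<Phi>(1)[OF A] by simp
  fix c assume "c < dim_vec (0\<^sub>v l)"
  then have c: "c < l" by simp
  have "(P * \<Phi> A) $$ (i, c) = 0"
  proof (rule linear_functional_vanishing_on_mat_units[where g = "\<lambda>A. (P * \<Phi> A) $$ (i, c)", OF _ _ _ A])
    show "(P * \<Phi> (A + B)) $$ (i, c) = (P * \<Phi> A) $$ (i, c) + (P * \<Phi> B) $$ (i, c)"
      if "A \<in> carrier_mat n n" "B \<in> carrier_mat n n" for A B
      using that P i c \<Phi>(1)[OF that(1)] \<Phi>(1)[OF that(2)]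
      by (simp add: \<Phi>(2) mult_add_distrib_mat[OF P])
    show "(P * \<Phi> (d \<cdot>\<^sub>m A)) $$ (i, c) = d * (P * \<Phi> A) $$ (i, c)"
      if "A \<in> carrier_mat n n" for d A
      using that P i c \<Phi>(1)[OF that] by (simp add: \<Phi>(3) mult_smult_distrib[OF P])
  qed (rule units[OF _ _ c])
  then show "row (P * \<Phi> A) i $ c = 0\<^sub>v l $ c" using P \<Phi>(1)[OF A] i c by simp
qed

lemma pivot_fun_zero_rows_suffix:
  assumes "dim_row C = nr" "pivot_fun C f nc"
  obtains r where "r \<le> nr" "\<And>i. i < nr \<Longrightarrow> f i < nc \<longleftrightarrow> i < r"
proof -
  note pivot = pivot_funD[OF assms]
  define r where "r = (LEAST i. i < nr \<longrightarrow> f i = nc)"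
  have r_le: "r \<le> nr" unfolding r_def by (rule Least_le) simp
  have "f i < nc \<longleftrightarrow> i < r" if i: "i < nr" for i
  proof
    assume "i < r"
    then have "f i \<noteq> nc" using i not_less_Least unfolding r_def by blast
    then show "f i < nc" using pivot(1)[OF i] by simp
  next
    assume "f i < nc"
    show "i < r"
    proof (rule ccontr)
      assume "\<not> i < r"
      then have "r < nr" "f r = nc" using i LeastI[of "\<lambda>i. i < nr \<longrightarrow> f i = nc" nr] unfolding r_def
        by auto
      then have "f (r + (i - r)) = nc"
        using pivot_bound[OF assms, of r "i - r"] pivot(1)[OF i] \<open>\<not> i < r\<close> i by auto
      then show False using \<open>f i < nc\<close> \<open>\<not> i < r\<close> by simp
    qed
  qed
  with r_le show ?thesis by (rule that)
qed

text \<open>Gauss-Jordan elimination of the matrix with columns vs: its zero rows give the vanishing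
  coordinates, its pivot columns the unit vectors.\<close>
lemma change_of_basis_to_coordinate_span:
  fixes vs :: "'a::field vec list"
  assumes vs: "set vs \<subseteq> carrier_vec l"
  obtains P Q r where "P \<in> carrier_mat l l" "Q \<in> carrier_mat l l" "P * Q = 1\<^sub>m l" "Q * P = 1\<^sub>m l"
    "r \<le> l"
    "\<And>v i. v \<in> set vs \<Longrightarrow> r \<le> i \<Longrightarrow> i < l \<Longrightarrow> (P *\<^sub>v v) $ i = 0"
    "\<And>i. i < r \<Longrightarrow> Q *\<^sub>v unit_vec l i \<in> set vs"
proof -
  define R where "R = mat_of_cols l vs"
  define N where "N = length vs"
  have R: "R \<in> carrier_mat l N" unfolding R_def N_def by simp
  note gauss = gauss_jordan_single[OF R refl]
  define C where "C = gauss_jordan_single R"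
  have C: "C \<in> carrier_mat l N" using gauss(2) unfolding C_def .
  obtain P Q where CPR: "C = P * R" and P: "P \<in> carrier_mat l l" and Q: "Q \<in> carrier_mat l l"
    and PQ: "P * Q = 1\<^sub>m l" and QP: "Q * P = 1\<^sub>m l"
    using gauss(4) unfolding C_def by blast
  obtain f where pivot: "pivot_fun C f N"
    using gauss(3) C unfolding C_def row_echelon_form_def by auto
  have dim_C: "dim_row C = l" using C by simp
  note pivotD = pivot_funD[OF dim_C pivot]
  obtain r where r: "r \<le> l" "\<And>i. i < l \<Longrightarrow> f i < N \<longleftrightarrow> i < r"
    using pivot_fun_zero_rows_suffix[OF dim_C pivot] by blast
  have col_C: "col C t = P *\<^sub>v vs ! t" if "t < N" for t
    using that vs col_mult2[OF P R] unfolding CPR R_def N_def by (simp add: subsetD)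
  show ?thesis
  proof (rule that[OF P Q PQ QP r(1)])
    fix v i assume v: "v \<in> set vs" and i: "r \<le> i" "i < l"
    obtain t where t: "t < N" "v = vs ! t" using v unfolding N_def by (metis in_set_conv_nth)
    have "f i = N" using r(2)[OF i(2)] pivotD(1)[OF i(2)] i(1) by auto
    have "(P *\<^sub>v v) $ i = col C t $ i" using col_C[OF t(1)] t(2) by simp
    also have "\<dots> = C $$ (i, t)" using C t(1) i(2) by simp
    also have "\<dots> = 0" using pivotD(2)[OF i(2)] \<open>f i = N\<close> t(1) by simp
    finally show "(P *\<^sub>v v) $ i = 0" .
  next
    fix i assume i: "i < r"
    have il: "i < l" and fi: "f i < N" using i r by auto
    have "col C (f i) = unit_vec l i"
      using pivotD(4)[OF il fi] pivotD(5)[OF il fi] C il fi by (intro eq_vecI) auto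
    then have "Q *\<^sub>v unit_vec l i = Q *\<^sub>v (P *\<^sub>v vs ! f i)" using col_C[OF fi] by simp
    also have "\<dots> = vs ! f i"
      using vs fi Q P QP unfolding N_def
      by (simp add: assoc_mult_mat_vec[symmetric, of _ l l _ l] subsetD)
    finally show "Q *\<^sub>v unit_vec l i \<in> set vs" using fi unfolding N_def by simp
  qed
qed

lemma set_cols: "set (cols A) = col A ` {..<dim_col A}"
  by (simp add: cols_def lessThan_atLeast0)

lemma index_mat_eq_mult_unit_vec:
  fixes T :: "'a::semiring_1 mat"
  assumes "T \<in> carrier_mat l l" "i < l" "j < l"
  shows "T $$ (i, j) = (T *\<^sub>v unit_vec l j) $ i"
  using assms by (simp add: scalar_prod_right_unit[of j l])

lemma nonzero_entry_strictly_upper: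
  fixes P M Q :: "'a::semiring_1 mat"
  assumes P: "P \<in> carrier_mat l l" and M: "M \<in> carrier_mat l l" and Q: "Q \<in> carrier_mat l l"
    and rows: "\<And>i. r \<le> i \<Longrightarrow> i < l \<Longrightarrow> row (P * M) i = 0\<^sub>v l"
    and cols: "\<And>j. j < r \<Longrightarrow> (M * Q) *\<^sub>v unit_vec l j = 0\<^sub>v l"
    and ij: "i < l" "j < l" and nz: "(P * M * Q) $$ (i, j) \<noteq> 0"
  shows "i < r \<and> r \<le> j"
proof
  show "i < r"
  proof (rule ccontr)
    assume "\<not> i < r"
    have "(P * M * Q) $$ (i, j) = row (P * M) i \<bullet> col Q j"
      by (rule index_mult_mat(1)) (use ij P M Q in auto)
    also have "\<dots> = 0" using rows[OF _ ij(1)] \<open>\<not> i < r\<close> Q ij by simp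
    finally show False using nz by contradiction
  qed
  show "r \<le> j"
  proof (rule ccontr)
    assume "\<not> r \<le> j"
    have "(P * M * Q) $$ (i, j) = ((P * (M * Q)) *\<^sub>v unit_vec l j) $ i"
      using assoc_mult_mat[OF P M Q] index_mat_eq_mult_unit_vec[of _ l i j] P M Q ij by simp
    also have "\<dots> = (P *\<^sub>v ((M * Q) *\<^sub>v unit_vec l j)) $ i"
      using assoc_mult_mat_vec[OF P mult_carrier_mat[OF M Q] unit_vec_carrier] by simp
    also have "\<dots> = 0" using cols \<open>\<not> r \<le> j\<close> P ij by simp
    finally show False using nz by contradiction
  qed
qed

lemma square_zero_linear_image_strictly_upper:
  fixes \<Phi> :: "'a::field mat \<Rightarrow> 'a mat"
  assumes lin: "linear_mat_map n l \<Phi>"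
    and square_zero: "\<And>X Y. X \<in> carrier_mat n n \<Longrightarrow> Y \<in> carrier_mat n n \<Longrightarrow> \<Phi> X * \<Phi> Y = 0\<^sub>m l l"
  obtains P Q r where "P \<in> carrier_mat l l" "Q \<in> carrier_mat l l" "P * Q = 1\<^sub>m l" "Q * P = 1\<^sub>m l"
    "r \<le> l"
    "\<And>A i j. A \<in> carrier_mat n n \<Longrightarrow> i < l \<Longrightarrow> j < l \<Longrightarrow> (P * \<Phi> A * Q) $$ (i, j) \<noteq> 0 \<Longrightarrow>
       i < r \<and> r \<le> j"
proof -
  note \<Phi> = linear_mat_mapD[OF lin]
  \<comment> \<open>The columns of the images of the matrix units span the sum of all images of \<Phi>.\<close>
  define vs where "vs = concat [cols (\<Phi> (mat_unit n k j)). k \<leftarrow> [0..<n], j \<leftarrow> [0..<n]]"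
  have unit_images: "\<Phi> (mat_unit n k j) \<in> carrier_mat l l" for k j
    by (rule \<Phi>(1)[OF mat_unit_carrier])
  then have "set (cols (\<Phi> (mat_unit n k j))) \<subseteq> carrier_vec l" for k j
    using cols_dim by (metis carrier_matD(1))
  then have vs: "set vs \<subseteq> carrier_vec l"
    unfolding vs_def by auto
  have set_vs: "set vs = (\<Union>k<n. \<Union>j<n. col (\<Phi> (mat_unit n k j)) ` {..<l})"
    unfolding vs_def using carrier_matD[OF unit_images] by (simp add: set_cols atLeast0LessThan)
  obtain P Q r where P: "P \<in> carrier_mat l l" and Q: "Q \<in> carrier_mat l l"
    and PQ: "P * Q = 1\<^sub>m l" and QP: "Q * P = 1\<^sub>m l" and r: "r \<le> l"
    and low_rows: "\<And>v i. v \<in> set vs \<Longrightarrow> r \<le> i \<Longrightarrow> i < l \<Longrightarrow> (P *\<^sub>v v) $ i = 0"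
    and pivots: "\<And>i. i < r \<Longrightarrow> Q *\<^sub>v unit_vec l i \<in> set vs"
    using change_of_basis_to_coordinate_span[OF vs] by blast
  have low_rows_vanish: "row (P * \<Phi> A) i = 0\<^sub>v l"
    if A: "A \<in> carrier_mat n n" and i: "r \<le> i" "i < l" for A i
  proof (rule linear_image_row_vanishing[OF lin P i(2) _ A])
    fix k j c assume kjc: "k < n" "j < n" "c < l"
    then have "col (\<Phi> (mat_unit n k j)) c \<in> set vs" unfolding set_vs by blast
    then show "(P * \<Phi> (mat_unit n k j)) $$ (i, c) = 0"
      using low_rows[OF _ i] P unit_images[of k j] i kjc by simp
  qed
  have pivot_cols_vanish: "(\<Phi> A * Q) *\<^sub>v unit_vec l j = 0\<^sub>v l"
    if A: "A \<in> carrier_mat n n" and j: "j < r" for A j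
  proof -
    obtain k j' c where kjc: "k < n" "j' < n" "c < l"
      and eq: "Q *\<^sub>v unit_vec l j = col (\<Phi> (mat_unit n k j')) c"
      using pivots[OF j] unfolding set_vs by blast
    have "(\<Phi> A * Q) *\<^sub>v unit_vec l j = \<Phi> A *\<^sub>v col (\<Phi> (mat_unit n k j')) c"
      using assoc_mult_mat_vec[OF \<Phi>(1)[OF A] Q unit_vec_carrier] eq by simp
    also have "\<dots> = col (\<Phi> A * \<Phi> (mat_unit n k j')) c"
      using col_mult2[OF \<Phi>(1)[OF A] unit_images kjc(3)] by simp
    also have "\<dots> = 0\<^sub>v l" using square_zero[OF A mat_unit_carrier] kjc by simp
    finally show ?thesis .
  qed
  show ?thesis
    by (rule that[OF P Q PQ QP r], rule nonzero_entry_strictly_upper[OF P \<Phi>(1) Q])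
      (use low_rows_vanish pivot_cols_vanish in auto)
qed

definition reindex_rows :: "(nat \<Rightarrow> nat) \<Rightarrow> 'a mat \<Rightarrow> 'a mat" where
  "reindex_rows \<pi> A = mat (dim_row A) (dim_col A) (\<lambda>(i, j). A $$ (\<pi> i, j))"

definition reindex_cols :: "(nat \<Rightarrow> nat) \<Rightarrow> 'a mat \<Rightarrow> 'a mat" where
  "reindex_cols \<pi> A = mat (dim_row A) (dim_col A) (\<lambda>(i, j). A $$ (i, \<pi> j))"

lemma reindex_rows_carrier [simp]: "A \<in> carrier_mat nr nc \<Longrightarrow> reindex_rows \<pi> A \<in> carrier_mat nr nc"
  and reindex_cols_carrier [simp]: "A \<in> carrier_mat nr nc \<Longrightarrow> reindex_cols \<pi> A \<in> carrier_mat nr nc"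
  unfolding reindex_rows_def reindex_cols_def by auto

lemma index_reindexed_conjugate:
  fixes P M Q :: "'a::semiring_1 mat"
  assumes P: "P \<in> carrier_mat l l" and M: "M \<in> carrier_mat l l" and Q: "Q \<in> carrier_mat l l"
    and st: "s < l" "t < l" "\<pi> s < l" "\<pi> t < l"
  shows "(reindex_rows \<pi> P * M * reindex_cols \<pi> Q) $$ (s, t) = (P * M * Q) $$ (\<pi> s, \<pi> t)"
proof -
  have P': "reindex_rows \<pi> P \<in> carrier_mat l l" and Q': "reindex_cols \<pi> Q \<in> carrier_mat l l"
    using P Q by simp_all
  have "row (reindex_rows \<pi> P) s = row P (\<pi> s)"
    unfolding reindex_rows_def using P st by (intro eq_vecI) auto
  then have row_P'M: "row (reindex_rows \<pi> P * M) s = row (P * M) (\<pi> s)"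
    using row_mult[OF P' M st(1)] row_mult[OF P M st(3)] by simp
  have col_Q': "col (reindex_cols \<pi> Q) t = col Q (\<pi> t)"
    unfolding reindex_cols_def using Q st by (intro eq_vecI) auto
  have "(reindex_rows \<pi> P * M * reindex_cols \<pi> Q) $$ (s, t)
      = row (reindex_rows \<pi> P * M) s \<bullet> col (reindex_cols \<pi> Q) t"
    by (rule index_mult_mat(1)) (use P' M Q' st in auto)
  also have "\<dots> = (P * M * Q) $$ (\<pi> s, \<pi> t)"
    unfolding row_P'M col_Q' by (rule index_mult_mat(1)[symmetric]) (use P M Q st in auto)
  finally show ?thesis .
qed

lemma reindexed_inverse_pair:
  fixes P Q :: "'a::field mat"
  assumes P: "P \<in> carrier_mat l l" and Q: "Q \<in> carrier_mat l l" and PQ: "P * Q = 1\<^sub>m l"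
    and \<pi>: "\<And>s. s < l \<Longrightarrow> \<pi> s < l" "inj_on \<pi> {..<l}"
  shows "reindex_rows \<pi> P * reindex_cols \<pi> Q = 1\<^sub>m l"
    and "reindex_cols \<pi> Q * reindex_rows \<pi> P = 1\<^sub>m l"
proof -
  have P': "reindex_rows \<pi> P \<in> carrier_mat l l" and Q': "reindex_cols \<pi> Q \<in> carrier_mat l l"
    using P Q by simp_all
  show "reindex_rows \<pi> P * reindex_cols \<pi> Q = 1\<^sub>m l"
  proof (rule eq_matI)
    fix s t assume "s < dim_row (1\<^sub>m l :: 'a mat)" "t < dim_col (1\<^sub>m l :: 'a mat)"
    then have st: "s < l" "t < l" by auto
    have "(reindex_rows \<pi> P * reindex_cols \<pi> Q) $$ (s, t)
        = (reindex_rows \<pi> P * 1\<^sub>m l * reindex_cols \<pi> Q) $$ (s, t)"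
      using P' by simp
    also have "\<dots> = (P * 1\<^sub>m l * Q) $$ (\<pi> s, \<pi> t)"
      by (rule index_reindexed_conjugate[OF P _ Q st \<pi>(1)[OF st(1)] \<pi>(1)[OF st(2)]]) simp
    also have "\<dots> = 1\<^sub>m l $$ (s, t)"
      using PQ P st \<pi> by (auto simp: inj_on_def)
    finally show "(reindex_rows \<pi> P * reindex_cols \<pi> Q) $$ (s, t) = 1\<^sub>m l $$ (s, t)" .
  qed (use P' Q' in auto)
  then show "reindex_cols \<pi> Q * reindex_rows \<pi> P = 1\<^sub>m l"
    by (rule mat_mult_left_right_inverse[OF P' Q'])
qed

text \<open>The positions of the blocks Z12, Zh13 and Zh32 of the normal form.\<close>
definition normal_form_support :: "nat \<Rightarrow> nat \<Rightarrow> nat \<Rightarrow> nat \<Rightarrow> nat \<Rightarrow> bool" where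
  "normal_form_support p u v s t \<longleftrightarrow>
     s < p \<and> p \<le> t \<and> t < 2 * p \<or>
     s < u \<and> 2 * p \<le> t \<and> t < 2 * p + v \<or>
     2 * p + v \<le> s \<and> p + u \<le> t \<and> t < 2 * p"

definition square_zero_normal_form :: "nat \<Rightarrow> nat \<Rightarrow> nat \<Rightarrow> nat \<Rightarrow> 'a::zero mat \<Rightarrow> bool" where
  "square_zero_normal_form p q u v N \<longleftrightarrow>
    (\<exists>Z12 \<in> carrier_mat p p. \<exists>Zh13 \<in> carrier_mat u v. \<exists>Zh32 \<in> carrier_mat (q - v) (p - u).
      N = block3_mat p p q
        (0\<^sub>m p p) Z12 (four_block_mat Zh13 (0\<^sub>m u (q - v)) (0\<^sub>m (p - u) v) (0\<^sub>m (p - u) (q - v)))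
        (0\<^sub>m p p) (0\<^sub>m p p) (0\<^sub>m p q)
        (0\<^sub>m q p) (four_block_mat (0\<^sub>m v u) (0\<^sub>m v (p - u)) (0\<^sub>m (q - v) u) Zh32) (0\<^sub>m q q))"

lemma square_zero_normal_form_iff_support:
  assumes N: "N \<in> carrier_mat (2 * p + q) (2 * p + q)" and uv: "u \<le> p" "v \<le> q"
  shows "square_zero_normal_form p q u v N \<longleftrightarrow>
    (\<forall>s < 2 * p + q. \<forall>t < 2 * p + q. N $$ (s, t) \<noteq> 0 \<longrightarrow> normal_form_support p u v s t)"
proof
  assume "square_zero_normal_form p q u v N"
  then show "\<forall>s < 2 * p + q. \<forall>t < 2 * p + q. N $$ (s, t) \<noteq> 0 \<longrightarrow> normal_form_support p u v s t"
    unfolding square_zero_normal_form_def block3_mat_def normal_form_support_def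
    using uv by (auto split: if_splits)
next
  assume support: "\<forall>s < 2 * p + q. \<forall>t < 2 * p + q. N $$ (s, t) \<noteq> 0 \<longrightarrow> normal_form_support p u v s t"
  let ?Z12 = "mat p p (\<lambda>(i, j). N $$ (i, j + p))"
  let ?Zh13 = "mat u v (\<lambda>(i, j). N $$ (i, j + 2 * p))"
  let ?Zh32 = "mat (q - v) (p - u) (\<lambda>(i, j). N $$ (i + 2 * p + v, j + p + u))"
  have normal_form: "N = block3_mat p p q
        (0\<^sub>m p p) ?Z12 (four_block_mat ?Zh13 (0\<^sub>m u (q - v)) (0\<^sub>m (p - u) v) (0\<^sub>m (p - u) (q - v)))
        (0\<^sub>m p p) (0\<^sub>m p p) (0\<^sub>m p q)
        (0\<^sub>m q p) (four_block_mat (0\<^sub>m v u) (0\<^sub>m v (p - u)) (0\<^sub>m (q - v) u) ?Zh32) (0\<^sub>m q q)"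
    (is "N = ?B")
  proof (rule eq_matI)
    fix s t assume "s < dim_row ?B" "t < dim_col ?B"
    then have st: "s < 2 * p + q" "t < 2 * p + q" by (auto simp: block3_mat_def)
    have outside: "\<not> normal_form_support p u v s t \<Longrightarrow> N $$ (s, t) = 0" using support st by blast
    show "N $$ (s, t) = ?B $$ (s, t)"
      using st uv unfolding block3_mat_def
      by (auto simp: ac_simps normal_form_support_def intro!: outside)
  qed (use N in \<open>auto simp: block3_mat_def\<close>)
  show "square_zero_normal_form p q u v N"
    unfolding square_zero_normal_form_def by (rule bexI, rule bexI, rule bexI, rule normal_form) auto
qed

lemma normal_form_support_mult_zero:
  fixes N1 N2 :: "'a::semiring_0 mat"
  assumes N1: "N1 \<in> carrier_mat l l" and N2: "N2 \<in> carrier_mat l l" and "u \<le> p"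
    and support1: "\<And>s t. s < l \<Longrightarrow> t < l \<Longrightarrow> N1 $$ (s, t) \<noteq> 0 \<Longrightarrow> normal_form_support p u v s t"
    and support2: "\<And>s t. s < l \<Longrightarrow> t < l \<Longrightarrow> N2 $$ (s, t) \<noteq> 0 \<Longrightarrow> normal_form_support p u v s t"
  shows "N1 * N2 = 0\<^sub>m l l"
proof (rule eq_matI)
  fix s t assume "s < dim_row (0\<^sub>m l l :: 'a mat)" "t < dim_col (0\<^sub>m l l :: 'a mat)"
  then have st: "s < l" "t < l" by auto
  have "N1 $$ (s, k) * N2 $$ (k, t) = 0" if k: "k < l" for k
    using support1[OF st(1) k] support2[OF k st(2)] \<open>u \<le> p\<close>
    unfolding normal_form_support_def by fastforce
  then have "row N1 s \<bullet> col N2 t = 0"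
    using N1 N2 st unfolding scalar_prod_def by (intro sum.neutral) auto
  then show "(N1 * N2) $$ (s, t) = 0\<^sub>m l l $$ (s, t)" using N1 N2 st by simp
qed (use N1 N2 in auto)

text \<open>For 2 r > l the new middle block [p, 2 p) takes the last p = l - r old indices, so that the
  r = p + q old indices of the possibly nonzero rows fill the first and the last block.\<close>
lemma strictly_upper_block_reindexed_to_normal_form_support:
  assumes "r \<le> l"
  obtains p q u v \<pi> where "2 * p + q = l" "u \<le> p" "v \<le> q"
    "\<And>s. s < l \<Longrightarrow> \<pi> s < l" "inj_on \<pi> {..<l}"
    "\<And>s t. s < l \<Longrightarrow> t < l \<Longrightarrow> \<pi> s < r \<Longrightarrow> r \<le> \<pi> t \<Longrightarrow> normal_form_support p u v s t"
proof (cases "2 * r \<le> l")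
  case True
  show ?thesis
    by (rule that[of r "l - 2 * r" r "l - 2 * r" id]) (use True in \<open>auto simp: normal_form_support_def\<close>)
next
  case False
  define p where "p = l - r"
  define q where "q = 2 * r - l"
  have l: "l = 2 * p + q" and r: "r = p + q" using False \<open>r \<le> l\<close> unfolding p_def q_def by auto
  show ?thesis
    by (rule that[of p q 0 0 "\<lambda>s. if s < p then s else if s < 2 * p then s + q else s - p"])
      (auto simp: l r normal_form_support_def inj_on_def split: if_splits)
qed

lemma conjugates_mult_zero:
  fixes S Sinv M1 M2 :: "'a::semiring_1 mat"
  assumes carrier: "S \<in> carrier_mat l l" "Sinv \<in> carrier_mat l l" "M1 \<in> carrier_mat l l" "M2 \<in> carrier_mat l l"
    and inverse: "S * Sinv = 1\<^sub>m l"
    and zero: "(Sinv * M1 * S) * (Sinv * M2 * S) = 0\<^sub>m l l"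
  shows "M1 * M2 = 0\<^sub>m l l"
proof -
  have "M1 * M2 = (S * Sinv) * M1 * (S * Sinv) * M2 * (S * Sinv)"
    using carrier unfolding inverse by simp
  also have "\<dots> = S * ((Sinv * M1 * S) * (Sinv * M2 * S)) * Sinv"
    using carrier by (simp add: assoc_mult_mat[of _ l l _ l _ l])
  also have "\<dots> = 0\<^sub>m l l" using carrier unfolding zero by simp
  finally show ?thesis .
qed

lemma square_zero_linear_image_normal_form:
  fixes \<Phi> :: "'a::field mat \<Rightarrow> 'a mat"
  assumes lin: "linear_mat_map n l \<Phi>"
    and square_zero: "\<And>X Y. X \<in> carrier_mat n n \<Longrightarrow> Y \<in> carrier_mat n n \<Longrightarrow> \<Phi> X * \<Phi> Y = 0\<^sub>m l l"
  obtains p q u v S0 S0inv where "2 * p + q = l" "u \<le> p" "v \<le> q"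
    "S0 \<in> carrier_mat l l" "S0inv \<in> carrier_mat l l" "S0 * S0inv = 1\<^sub>m l" "S0inv * S0 = 1\<^sub>m l"
    "\<And>A. A \<in> carrier_mat n n \<Longrightarrow> square_zero_normal_form p q u v (S0inv * \<Phi> A * S0)"
proof -
  obtain P Q r where P: "P \<in> carrier_mat l l" and Q: "Q \<in> carrier_mat l l"
    and PQ: "P * Q = 1\<^sub>m l" and r: "r \<le> l"
    and upper: "\<And>A i j. A \<in> carrier_mat n n \<Longrightarrow> i < l \<Longrightarrow> j < l \<Longrightarrow> (P * \<Phi> A * Q) $$ (i, j) \<noteq> 0 \<Longrightarrow>
       i < r \<and> r \<le> j"
    using square_zero_linear_image_strictly_upper[OF lin square_zero] by metis
  obtain p q u v \<pi> where l: "2 * p + q = l" and uv: "u \<le> p" "v \<le> q"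
    and \<pi>: "\<And>s. s < l \<Longrightarrow> \<pi> s < l" "inj_on \<pi> {..<l}"
    and support: "\<And>s t. s < l \<Longrightarrow> t < l \<Longrightarrow> \<pi> s < r \<Longrightarrow> r \<le> \<pi> t \<Longrightarrow> normal_form_support p u v s t"
    using strictly_upper_block_reindexed_to_normal_form_support[OF r] by metis
  define S0inv where "S0inv = reindex_rows \<pi> P"
  define S0 where "S0 = reindex_cols \<pi> Q"
  have S0: "S0 \<in> carrier_mat l l" and S0inv: "S0inv \<in> carrier_mat l l"
    unfolding S0_def S0inv_def using P Q by simp_all
  note inverse = reindexed_inverse_pair[OF P Q PQ \<pi>(1) \<pi>(2), folded S0_def S0inv_def]
  have "square_zero_normal_form p q u v (S0inv * \<Phi> A * S0)" if A: "A \<in> carrier_mat n n" for A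
  proof -
    have \<Phi>A: "\<Phi> A \<in> carrier_mat l l" using linear_mat_mapD(1)[OF lin A] .
    have "normal_form_support p u v s t"
      if st: "s < l" "t < l" and nz: "(S0inv * \<Phi> A * S0) $$ (s, t) \<noteq> 0" for s t
    proof -
      have "(P * \<Phi> A * Q) $$ (\<pi> s, \<pi> t) \<noteq> 0"
        using nz index_reindexed_conjugate[OF P \<Phi>A Q st \<pi>(1)[OF st(1)] \<pi>(1)[OF st(2)]]
        unfolding S0_def S0inv_def by simp
      then show ?thesis using upper[OF A \<pi>(1)[OF st(1)] \<pi>(1)[OF st(2)]] support[OF st] by blast
    qed
    moreover have "S0inv * \<Phi> A * S0 \<in> carrier_mat (2 * p + q) (2 * p + q)"
      using S0 S0inv \<Phi>A l by auto
    ultimately show ?thesis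
      using square_zero_normal_form_iff_support[OF _ uv] l by blast
  qed
  with l uv S0 S0inv inverse(2,1) show ?thesis by (rule that)
qed

lemma linear_mat_map_square_zero_iff_normal_form:
  fixes \<Phi> :: "'a::field mat \<Rightarrow> 'a mat"
  assumes lin: "linear_mat_map n l \<Phi>"
  shows "(\<forall>X \<in> carrier_mat n n. \<forall>Y \<in> carrier_mat n n. \<Phi> X * \<Phi> Y = 0\<^sub>m l l) \<longleftrightarrow>
    (\<exists>p q u v. 2 * p + q = l \<and> u \<le> p \<and> v \<le> q \<and>
      (\<exists>S0 \<in> carrier_mat l l. \<exists>S0inv \<in> carrier_mat l l. S0 * S0inv = 1\<^sub>m l \<and> S0inv * S0 = 1\<^sub>m l \<and>
        (\<forall>A \<in> carrier_mat n n. square_zero_normal_form p q u v (S0inv * \<Phi> A * S0))))"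
proof
  assume "\<forall>X \<in> carrier_mat n n. \<forall>Y \<in> carrier_mat n n. \<Phi> X * \<Phi> Y = 0\<^sub>m l l"
  then obtain p q u v S0 S0inv where "2 * p + q = l" "u \<le> p" "v \<le> q"
    "S0 \<in> carrier_mat l l" "S0inv \<in> carrier_mat l l" "S0 * S0inv = 1\<^sub>m l" "S0inv * S0 = 1\<^sub>m l"
    "\<And>A. A \<in> carrier_mat n n \<Longrightarrow> square_zero_normal_form p q u v (S0inv * \<Phi> A * S0)"
    using square_zero_linear_image_normal_form[OF lin] by metis
  then show "\<exists>p q u v. 2 * p + q = l \<and> u \<le> p \<and> v \<le> q \<and>
      (\<exists>S0 \<in> carrier_mat l l. \<exists>S0inv \<in> carrier_mat l l. S0 * S0inv = 1\<^sub>m l \<and> S0inv * S0 = 1\<^sub>m l \<and>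
        (\<forall>A \<in> carrier_mat n n. square_zero_normal_form p q u v (S0inv * \<Phi> A * S0)))"
    by blast
next
  assume "\<exists>p q u v. 2 * p + q = l \<and> u \<le> p \<and> v \<le> q \<and>
      (\<exists>S0 \<in> carrier_mat l l. \<exists>S0inv \<in> carrier_mat l l. S0 * S0inv = 1\<^sub>m l \<and> S0inv * S0 = 1\<^sub>m l \<and>
        (\<forall>A \<in> carrier_mat n n. square_zero_normal_form p q u v (S0inv * \<Phi> A * S0)))"
  then obtain p q u v S0 S0inv where l: "2 * p + q = l" and uv: "u \<le> p" "v \<le> q"
    and S0: "S0 \<in> carrier_mat l l" and S0inv: "S0inv \<in> carrier_mat l l" and inverse: "S0 * S0inv = 1\<^sub>m l"
    and normal: "\<And>A. A \<in> carrier_mat n n \<Longrightarrow> square_zero_normal_form p q u v (S0inv * \<Phi> A * S0)"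
    by blast
  have conj: "S0inv * \<Phi> A * S0 \<in> carrier_mat l l" if "A \<in> carrier_mat n n" for A
    using S0 S0inv linear_mat_mapD(1)[OF lin that] by auto
  have support: "normal_form_support p u v s t"
    if "A \<in> carrier_mat n n" "s < l" "t < l" "(S0inv * \<Phi> A * S0) $$ (s, t) \<noteq> 0" for A s t
    using square_zero_normal_form_iff_support[OF conj[OF that(1), folded l] uv] normal[OF that(1)] that l
    by blast
  show "\<forall>X \<in> carrier_mat n n. \<forall>Y \<in> carrier_mat n n. \<Phi> X * \<Phi> Y = 0\<^sub>m l l"
  proof (intro ballI)
    fix X Y :: "'a mat" assume X: "X \<in> carrier_mat n n" and Y: "Y \<in> carrier_mat n n"
    have "(S0inv * \<Phi> X * S0) * (S0inv * \<Phi> Y * S0) = 0\<^sub>m l l"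
      by (rule normal_form_support_mult_zero[OF conj[OF X] conj[OF Y] uv(1)])
        (use support[OF X] support[OF Y] in auto)
    then show "\<Phi> X * \<Phi> Y = 0\<^sub>m l l"
      by (rule conjugates_mult_zero[OF S0 S0inv linear_mat_mapD(1)[OF lin X] linear_mat_mapD(1)[OF lin Y] inverse])
  qed
qed

theorem theorem3p8:
  fixes \<Phi> :: "'a::field mat \<Rightarrow> 'a mat" and n l :: nat
  assumes card: "infinite (UNIV :: 'a set) \<or> real (card (UNIV :: 'a set)) > (real l + 2) / 2"
    and lin: "linear_mat_map n l \<Phi>"
  shows "(\<forall>X \<in> carrier_mat n n. \<forall>Y \<in> carrier_mat n n. \<Phi> X * \<Phi> Y = 0\<^sub>m l l) \<longleftrightarrow>
    (\<exists>p q u v :: nat. 2 * p + q = l \<and> u \<le> p \<and> v \<le> q \<and>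
      (\<exists>S0 \<in> carrier_mat l l. \<exists>S0inv \<in> carrier_mat l l. S0 * S0inv = 1\<^sub>m l \<and> S0inv * S0 = 1\<^sub>m l \<and>
        (\<forall>A \<in> carrier_mat n n.
          (\<exists>Z12 \<in> carrier_mat p p. \<exists>Zh13 \<in> carrier_mat u v. \<exists>Zh32 \<in> carrier_mat (q - v) (p - u).
            S0inv * \<Phi> A * S0 =
              block3_mat p p q
                (0\<^sub>m p p) Z12 (four_block_mat Zh13 (0\<^sub>m u (q - v)) (0\<^sub>m (p - u) v) (0\<^sub>m (p - u) (q - v)))
                (0\<^sub>m p p) (0\<^sub>m p p) (0\<^sub>m p q)
                (0\<^sub>m q p) (four_block_mat (0\<^sub>m v u) (0\<^sub>m v (p - u)) (0\<^sub>m (q - v) u) Zh32) (0\<^sub>m q q)))))"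
  using linear_mat_map_square_zero_iff_normal_form[OF lin] unfolding square_zero_normal_form_def .

end
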